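(* Let $n\ge 3$, let $a<b<c$ be elements of $\mathcal{C}_n$ and let $k$ be an integer with $n-c\le k\le n-b-1$. Then the semiring $\mathcal{L}^{k}_{c}\left(\triangle^{(n)}\{a,b,c\}\right)=\{a_ib_{n-k-i}c_k:\ 0\le i\le n-k\}$ is isomorphic to the string $\mathcal{STR}^{(n-k)}\{a,b\}$.
   Context: For $N\ge1$, $\mathcal{C}_N=\{0,1,\dots,N-1\}$ with its usual order; $\widehat{\mathcal{E}}_{\mathcal{C}_N}$ is the set of all order-preserving maps $\mathcal{C}_N\to\mathcal{C}_N$ (not required to fix $0$), a semiring with $(\alpha+\beta)(x)=\max(\alpha(x),\beta(x))$ and $(\alpha\cdot\beta)(x)=\beta(\alpha(x))$. The notation $a_ib_\ell c_k$ (with $i+\ell+k=N$) denotes the map sending $0,\dots,i-1$ to $a$, the next $\ell$ elements to $b$ and the last $k$ to $c$. The triangle $\triangle^{(n)}\{a,b,c\}$ is the set of $\alpha\in\widehat{\mathcal{E}}_{\mathcal{C}_n}$ with image in $\{a,b,c\}$; its layer $\mathcal{L}^{k}_{c}$ is the set of elements mapping exactly $k$ elements to $c$ (a subsemiring for $n-c\le k\le n-b-1$). For $x<y$ in $\mathcal{C}_N$, the string $\mathcal{STR}^{(N)}\{x,y\}$ is the subsemiring of maps in $\widehat{\mathcal{E}}_{\mathcal{C}_N}$ with image in $\{x,y\}$. Isomorphism means semiring isomorphism. *)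

theory Defs
  imports Main
begin

text \<open>Maps C_N -> C_N are represented as functions nat => nat that vanish
  outside {0..<N} (canonical representative).\<close>

definition endo :: "nat \<Rightarrow> (nat \<Rightarrow> nat) set" where
  "endo N = {f. (\<forall>x y. x \<le> y \<longrightarrow> y < N \<longrightarrow> f x \<le> f y)
               \<and> (\<forall>x<N. f x < N) \<and> (\<forall>x\<ge>N. f x = 0)}"

definition eadd :: "(nat \<Rightarrow> nat) \<Rightarrow> (nat \<Rightarrow> nat) \<Rightarrow> (nat \<Rightarrow> nat)" where
  "eadd f g = (\<lambda>x. max (f x) (g x))"

definition emul :: "nat \<Rightarrow> (nat \<Rightarrow> nat) \<Rightarrow> (nat \<Rightarrow> nat) \<Rightarrow> (nat \<Rightarrow> nat)" where
  "emul N f g = (\<lambda>x. if x < N then g (f x) else 0)"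

definition triangle :: "nat \<Rightarrow> nat \<Rightarrow> nat \<Rightarrow> nat \<Rightarrow> (nat \<Rightarrow> nat) set" where
  "triangle n a b c = {f \<in> endo n. f ` {..<n} \<subseteq> {a, b, c}}"

definition layer :: "nat \<Rightarrow> nat \<Rightarrow> nat \<Rightarrow> nat \<Rightarrow> nat \<Rightarrow> (nat \<Rightarrow> nat) set" where
  "layer n a b c k = {f \<in> triangle n a b c. card {x. x < n \<and> f x = c} = k}"

definition str :: "nat \<Rightarrow> nat \<Rightarrow> nat \<Rightarrow> (nat \<Rightarrow> nat) set" where
  "str N x y = {f \<in> endo N. f ` {..<N} \<subseteq> {x, y}}"

text \<open>a_i b_l c_k in size N = i + l + k\<close>
definition abc :: "nat \<Rightarrow> nat \<Rightarrow> nat \<Rightarrow> nat \<Rightarrow> nat \<Rightarrow> nat \<Rightarrow> (nat \<Rightarrow> nat)" where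
  "abc N a b c i l = (\<lambda>x. if x < i then a else if x < i + l then b else if x < N then c else 0)"

definition semiring_iso :: "nat \<Rightarrow> (nat \<Rightarrow> nat) set \<Rightarrow> nat \<Rightarrow> (nat \<Rightarrow> nat) set \<Rightarrow> ((nat \<Rightarrow> nat) \<Rightarrow> (nat \<Rightarrow> nat)) \<Rightarrow> bool" where
  "semiring_iso N S M T h \<longleftrightarrow> bij_betw h S T \<and>
     (\<forall>f\<in>S. \<forall>g\<in>S. h (eadd f g) = eadd (h f) (h g) \<and> h (emul N f g) = emul M (h f) (h g))"

definition semiring_isomorphic :: "nat \<Rightarrow> (nat \<Rightarrow> nat) set \<Rightarrow> nat \<Rightarrow> (nat \<Rightarrow> nat) set \<Rightarrow> bool" where
  "semiring_isomorphic N S M T \<longleftrightarrow> (\<exists>h. semiring_iso N S M T h)"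

end

theory Submission
  imports Defs
begin

text \<open>An element of the layer is pinned down by two preimages: that of the top value c is an
  up-set of \<open>{..<n}\<close> with k elements, hence the final segment of length k, and that of the
  bottom value a is an initial segment \<open>{..<i}\<close>; everything in between is sent to b. So the
  layer consists of the maps \<open>a\<^sub>i b\<^sub>n\<^sub>-\<^sub>k\<^sub>-\<^sub>i c\<^sub>k\<close>, and such a map is determined by its
  restriction to \<open>{..<n-k}\<close>, an arbitrary order-preserving map with values in {a, b}. Since
  \<open>b < n - k\<close>, these restrictions map \<open>{..<n-k}\<close> into itself, so restricting commutes with
  composition, and it trivially commutes with pointwise maximum.\<close>

lemma down_closed_eq_lessThan_card:
  fixes S :: "nat set"
  assumes sub: "S \<subseteq> {..<n}" and down: "\<And>x y. x \<le> y \<Longrightarrow> y \<in> S \<Longrightarrow> x \<in> S"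
  shows "S = {..<card S}"
proof -
  define j where "j = (LEAST j. j \<notin> S)"
  have "n \<notin> S" using sub by auto
  hence j_notin: "j \<notin> S" unfolding j_def by (rule LeastI)
  have "S = {..<j}"
  proof (intro set_eqI iffI)
    fix x assume "x \<in> S"
    thus "x \<in> {..<j}" using down[of j x] j_notin by (cases "j \<le> x") auto
  next
    fix x assume "x \<in> {..<j}"
    thus "x \<in> S" using not_less_Least[of x "\<lambda>j. j \<notin> S"] unfolding j_def by auto
  qed
  thus ?thesis by simp
qed

lemma up_closed_eq_atLeastLessThan_card:
  fixes S :: "nat set"
  assumes sub: "S \<subseteq> {..<n}" and up: "\<And>x y. x \<le> y \<Longrightarrow> y < n \<Longrightarrow> x \<in> S \<Longrightarrow> y \<in> S"
  shows "S = {n - card S..<n}"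
proof -
  let ?T = "{..<n} - S"
  have T: "?T = {..<card ?T}"
    by (rule down_closed_eq_lessThan_card[of _ n]) (use up in auto)
  have "card ?T = n - card S"
    using sub by (simp add: card_Diff_subset finite_subset)
  with T have "?T = {..<n - card S}" by simp
  moreover have "S = {..<n} - ?T" using sub by auto
  ultimately show ?thesis by auto
qed

lemma layer_eq_abc:
  fixes n a b c k :: nat
  assumes ab: "a < b" and bc: "b < c" and cn: "c < n" and kn: "k \<le> n"
  shows "layer n a b c k = {abc n a b c i (n - k - i) | i. i \<le> n - k}"
proof
  show "layer n a b c k \<subseteq> {abc n a b c i (n - k - i) | i. i \<le> n - k}"
  proof
    fix f assume f: "f \<in> layer n a b c k"
    have mono: "\<And>x y. x \<le> y \<Longrightarrow> y < n \<Longrightarrow> f x \<le> f y"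
      and zero: "\<And>x. n \<le> x \<Longrightarrow> f x = 0"
      and vals: "\<And>x. x < n \<Longrightarrow> f x = a \<or> f x = b \<or> f x = c"
      and card_c: "card {x. x < n \<and> f x = c} = k"
      using f by (auto simp: layer_def triangle_def endo_def)
    define i where "i = card {x. x < n \<and> f x = a}"
    have up_c: "f y = c" if "x \<le> y" "y < n" "f x = c" for x y
      using mono[OF that(1,2)] vals[of y] that ab bc by auto
    have down_a: "f x = a" if "x \<le> y" "y < n" "f y = a" for x y
      using mono[OF that(1,2)] vals[of x] that ab bc by auto
    have C: "{x. x < n \<and> f x = c} = {n - k..<n}"
      using up_closed_eq_atLeastLessThan_card[of "{x. x < n \<and> f x = c}" n] card_c up_c
      by auto
    have A: "{x. x < n \<and> f x = a} = {..<i}"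
      unfolding i_def
      by (rule down_closed_eq_lessThan_card[of _ n]) (use down_a in auto)
    have i: "i \<le> n - k"
    proof (rule ccontr)
      assume "\<not> i \<le> n - k"
      hence "n - k \<in> {x. x < n \<and> f x = a}" using A by simp
      moreover from this have "n - k \<in> {x. x < n \<and> f x = c}" using C by auto
      ultimately show False using ab bc by simp
    qed
    have "f = abc n a b c i (n - k - i)"
    proof
      fix x
      have a_iff: "x < n \<Longrightarrow> f x = a \<longleftrightarrow> x < i" and c_iff: "x < n \<Longrightarrow> f x = c \<longleftrightarrow> n - k \<le> x"
        using A C by (simp_all add: set_eq_iff) blast+
      show "f x = abc n a b c i (n - k - i) x"
      proof (cases "x < n")
        case True
        thus ?thesis using a_iff c_iff vals[of x] i ab bc unfolding abc_def by auto
      qed (use i in \<open>auto simp: zero abc_def\<close>)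
    qed
    thus "f \<in> {abc n a b c i (n - k - i) | i. i \<le> n - k}" using i by auto
  qed
next
  show "{abc n a b c i (n - k - i) | i. i \<le> n - k} \<subseteq> layer n a b c k"
  proof clarify
    fix i assume i: "i \<le> n - k"
    let ?f = "abc n a b c i (n - k - i)"
    have "{x. x < n \<and> ?f x = c} = {n - k..<n}"
      using i ab bc unfolding abc_def by auto
    moreover have "?f \<in> endo n"
      using i ab bc cn unfolding abc_def endo_def by auto
    moreover have "?f ` {..<n} \<subseteq> {a, b, c}" unfolding abc_def by auto
    ultimately show "?f \<in> layer n a b c k"
      using kn unfolding layer_def triangle_def by auto
  qed
qed

definition truncate :: "nat \<Rightarrow> (nat \<Rightarrow> nat) \<Rightarrow> nat \<Rightarrow> nat" where
  "truncate m f = (\<lambda>x. if x < m then f x else 0)"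

definition pad :: "nat \<Rightarrow> nat \<Rightarrow> nat \<Rightarrow> (nat \<Rightarrow> nat) \<Rightarrow> nat \<Rightarrow> nat" where
  "pad n m c g = (\<lambda>x. if x < m then g x else if x < n then c else 0)"

lemma truncate_eadd: "truncate m (eadd f g) = eadd (truncate m f) (truncate m g)"
  by (auto simp: truncate_def eadd_def)

lemma truncate_emul:
  assumes "m \<le> n" and "\<And>x. x < m \<Longrightarrow> f x < m"
  shows "truncate m (emul n f g) = emul m (truncate m f) (truncate m g)"
  using assms by (auto simp: truncate_def emul_def)

lemma truncate_pad_str:
  assumes "g \<in> str m a b"
  shows "truncate m (pad n m c g) = g"
  using assms by (auto simp: truncate_def pad_def str_def endo_def)

lemma layer_values_below:
  assumes "a < b" "b < c" "c < n" "k \<le> n"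
    and "f \<in> layer n a b c k" and "x < n - k"
  shows "f x \<in> {a, b}"
proof -
  obtain i where "i \<le> n - k" and "f = abc n a b c i (n - k - i)"
    using assms(1-5) by (auto simp: layer_eq_abc)
  thus ?thesis using assms(6) by (simp add: abc_def)
qed

lemma pad_truncate_layer:
  assumes "a < b" "b < c" "c < n" "k \<le> n" and "f \<in> layer n a b c k"
  shows "pad n (n - k) c (truncate (n - k) f) = f"
proof -
  obtain i where "i \<le> n - k" and "f = abc n a b c i (n - k - i)"
    using assms by (auto simp: layer_eq_abc)
  thus ?thesis by (auto simp: abc_def pad_def truncate_def fun_eq_iff)
qed

lemma truncate_layer_in_str:
  assumes ab: "a < b" and bc: "b < c" and cn: "c < n" and kn: "k \<le> n" and bm: "b < n - k"
    and f: "f \<in> layer n a b c k"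
  shows "truncate (n - k) f \<in> str (n - k) a b"
proof -
  have mono: "\<And>x y. x \<le> y \<Longrightarrow> y < n \<Longrightarrow> f x \<le> f y"
    using f by (auto simp: layer_def triangle_def endo_def)
  have vals: "\<And>x. x < n - k \<Longrightarrow> f x \<in> {a, b}"
    by (rule layer_values_below[OF ab bc cn kn f])
  show ?thesis
    unfolding str_def endo_def
  proof (intro CollectI conjI allI impI)
    fix x y :: nat assume "x \<le> y" and "y < n - k"
    thus "truncate (n - k) f x \<le> truncate (n - k) f y" using mono[of x y] by (simp add: truncate_def)
  next
    fix x :: nat assume "x < n - k"
    thus "truncate (n - k) f x < n - k" using vals[of x] ab bm by (auto simp: truncate_def)
  next
    show "truncate (n - k) f ` {..<n - k} \<subseteq> {a, b}" using vals by (auto simp: truncate_def)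
  qed (simp add: truncate_def)
qed

lemma pad_str_in_layer:
  assumes ab: "a < b" and bc: "b < c" and cn: "c < n" and kn: "k \<le> n"
    and g: "g \<in> str (n - k) a b"
  shows "pad n (n - k) c g \<in> layer n a b c k"
proof -
  let ?f = "pad n (n - k) c g"
  have mono: "\<And>x y. x \<le> y \<Longrightarrow> y < n - k \<Longrightarrow> g x \<le> g y"
    and vals: "\<And>x. x < n - k \<Longrightarrow> g x = a \<or> g x = b"
    using g by (auto simp: str_def endo_def)
  have below_c: "\<And>x. x < n - k \<Longrightarrow> g x < c" using vals ab bc by fastforce
  have "?f \<in> endo n"
    unfolding endo_def
  proof (intro CollectI conjI allI impI)
    fix x y :: nat assume "x \<le> y" and "y < n"
    thus "?f x \<le> ?f y" using mono[of x y] below_c[of x] by (auto simp: pad_def)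
  next
    fix x :: nat assume "x < n"
    thus "?f x < n" using below_c[of x] cn by (auto simp: pad_def)
  qed (auto simp: pad_def)
  moreover have "?f ` {..<n} \<subseteq> {a, b, c}" using vals by (auto simp: pad_def)
  moreover have "{x. x < n \<and> ?f x = c} = {n - k..<n}"
  proof (intro set_eqI iffI)
    fix x assume "x \<in> {x. x < n \<and> ?f x = c}"
    thus "x \<in> {n - k..<n}" using below_c[of x] by (auto simp: pad_def split: if_splits)
  qed (simp add: pad_def)
  ultimately show ?thesis using kn by (simp add: layer_def triangle_def)
qed

lemma semiring_iso_truncate_layer:
  assumes ab: "a < b" and bc: "b < c" and cn: "c < n" and kn: "k \<le> n" and bm: "b < n - k"
  shows "semiring_iso n (layer n a b c k) (n - k) (str (n - k) a b) (truncate (n - k))"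
  unfolding semiring_iso_def
proof (intro conjI ballI)
  show "bij_betw (truncate (n - k)) (layer n a b c k) (str (n - k) a b)"
  proof (rule bij_betw_byWitness[where f' = "pad n (n - k) c"])
    show "\<forall>f\<in>layer n a b c k. pad n (n - k) c (truncate (n - k) f) = f"
      using pad_truncate_layer[OF ab bc cn kn] by blast
    show "\<forall>g\<in>str (n - k) a b. truncate (n - k) (pad n (n - k) c g) = g"
      using truncate_pad_str by blast
    show "truncate (n - k) ` layer n a b c k \<subseteq> str (n - k) a b"
      using truncate_layer_in_str[OF assms] by blast
    show "pad n (n - k) c ` str (n - k) a b \<subseteq> layer n a b c k"
      using pad_str_in_layer[OF ab bc cn kn] by blast
  qed
next
  fix f g assume f: "f \<in> layer n a b c k" and "g \<in> layer n a b c k"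
  show "truncate (n - k) (eadd f g) = eadd (truncate (n - k) f) (truncate (n - k) g)"
    by (rule truncate_eadd)
  have "\<And>x. x < n - k \<Longrightarrow> f x < n - k"
    using layer_values_below[OF ab bc cn kn f] ab bm by fastforce
  thus "truncate (n - k) (emul n f g) = emul (n - k) (truncate (n - k) f) (truncate (n - k) g)"
    by (intro truncate_emul) simp_all
qed

theorem proposition30:
  fixes n a b c k :: nat
  assumes "n \<ge> 3" and "a < b" and "b < c" and "c < n"
    and "n - c \<le> k" and "k \<le> n - b - 1"
  shows "layer n a b c k = {abc n a b c i (n - k - i) | i. i \<le> n - k}
         \<and> semiring_isomorphic n (layer n a b c k) (n - k) (str (n - k) a b)"
proof
  have kn: "k \<le> n" and bm: "b < n - k" using assms by auto
  show "layer n a b c k = {abc n a b c i (n - k - i) | i. i \<le> n - k}"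
    using layer_eq_abc[OF assms(2-4) kn] .
  show "semiring_isomorphic n (layer n a b c k) (n - k) (str (n - k) a b)"
    using semiring_iso_truncate_layer[OF assms(2-4) kn bm] by (auto simp: semiring_isomorphic_def)
qed

end
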